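(* Consider a sequence of designs indexed by $n$ as in the context, and let $\hat\mu_n\in\mathbb{R}^k$ be a moment-type estimator, i.e. there are fixed integers $l_1\ge 1$, $l_2\ge 0$ and, for each $n$, nonrandom vectors $\phi^1,\dots,\phi^{l_1+l_2}\in\mathbb{R}^{kn}$ and a known map $F=F_n:\mathbb{R}^{l_1+l_2}\to\mathbb{R}^k$ such that: (i) $\hat\mu_n=F(\hat m_n^1,\dots,\hat m_n^{l_1},m_n^{l_1+1},\dots,m_n^{l_1+l_2})$, where $\hat m_n^s=\frac1n 1_{kn}'\pi^{-1}\mathbf{R}\phi^s$ for $s\le l_1$ and $m_n^s=\frac1n 1_{kn}'\phi^s$ for all $s$; (ii) (uniform local Lipschitz property) there exist $N$, $C>0$, $\epsilon>0$ such that for all $n\ge N$ and all $(\tilde m^1,\dots,\tilde m^{l_1})$ with $\sum_{s=1}^{l_1}(\tilde m^s-m_n^s)^2<\epsilon$, $\|F(\tilde m^1,\dots,\tilde m^{l_1},m_n^{l_1+1},\dots,m_n^{l_1+l_2})-F(m_n^1,\dots,m_n^{l_1+l_2})\|_2\le C\sqrt{\sum_{s=1}^{l_1}(\tilde m^s-m_n^s)^2}$; (iii) there is $C'$ with $\frac1n\|\phi^s\|_2^2\le C'$ for all $s$ and all $n$. Let $\mu_n:=F(m_n^1,\dots,m_n^{l_1+l_2})$. If $|||\mathbf{D}|||_2/n\to 0$, then $$\hat\mu_n-\mu_n=O_p\Big(\sqrt{|||\mathbf{D}|||_2/n}\Big).$$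
   Context: Setup: there are $k$ treatment arms and $n$ units; $k$ is fixed while $n\to\infty$ along a sequence of finite populations, each with its own randomized design. All probabilities, expectations, variances, $O_p$ and $o_p$ refer only to the randomness of the treatment assignment (potential outcomes, covariates and all vectors called nonrandom are fixed). For unit $i$ and arm $a$, $\mathbf{R}_{ai}\in\{0,1\}$ indicates that unit $i$ is assigned to arm $a$; each unit is assigned to exactly one arm. $\mathbf{R}$ denotes the $kn\times kn$ diagonal matrix with diagonal $(\mathbf{R}_{11},\dots,\mathbf{R}_{1n},\mathbf{R}_{21},\dots,\mathbf{R}_{kn})$, and $\pi=\mathrm{E}[\mathbf{R}]$ is the diagonal matrix of assignment probabilities $\pi_{ai}$, assumed to lie in $(0,1)$. $1_{kn}$ is the all-ones vector in $\mathbb{R}^{kn}$. The first-order design matrix is $\mathbf{D}=\mathrm{Var}(\pi^{-1}\mathbf{R}1_{kn})\in\mathbb{R}^{kn\times kn}$, the covariance matrix of the vector with entries $\mathbf{R}_{ai}/\pi_{ai}$. $|||A|||_2$ denotes the spectral norm (largest singular value, equal to the largest eigenvalue for positive semidefinite $A$). *)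

theory Defs
  imports "HOL-Probability.Probability"
begin

text \<open>A design on n units and k arms is a pmf over assignment functions z, where
  z i is the arm of unit i (only i < n matters).
  Vectors in R^{kn} are functions nat => nat => real indexed by (arm a, unit i),
  a < k, i < n.\<close>

definition assign_ind :: "(nat \<Rightarrow> nat) \<Rightarrow> nat \<Rightarrow> nat \<Rightarrow> real" where
  "assign_ind z a i = (if z i = a then 1 else 0)"

definition assign_prob :: "(nat \<Rightarrow> nat) pmf \<Rightarrow> nat \<Rightarrow> nat \<Rightarrow> real" where
  "assign_prob p a i = measure_pmf.prob p {z. z i = a}"

text \<open>First-order design matrix D = Var(pi^{-1} R 1), entry ((a,i),(b,j)).\<close>
definition design_matrix :: "(nat \<Rightarrow> nat) pmf \<Rightarrow> nat \<times> nat \<Rightarrow> nat \<times> nat \<Rightarrow> real" where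
  "design_matrix p = (\<lambda>(a,i) (b,j).
     measure_pmf.expectation p (\<lambda>z.
       (assign_ind z a i / assign_prob p a i - 1) *
       (assign_ind z b j / assign_prob p b j - 1)))"

definition spec_norm :: "'i set \<Rightarrow> ('i \<Rightarrow> 'i \<Rightarrow> real) \<Rightarrow> real" where
  "spec_norm I M = Sup {sqrt (\<Sum>p\<in>I. (\<Sum>q\<in>I. M p q * x q)\<^sup>2) | x. (\<Sum>q\<in>I. (x q)\<^sup>2) \<le> 1}"

definition bigOp :: "(nat \<Rightarrow> (nat \<Rightarrow> nat) pmf) \<Rightarrow> (nat \<Rightarrow> (nat \<Rightarrow> nat) \<Rightarrow> real) \<Rightarrow> (nat \<Rightarrow> real) \<Rightarrow> bool" where
  "bigOp P X r = (\<forall>\<epsilon>>0. \<exists>M N. \<forall>n\<ge>N.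
      measure_pmf.prob (P n) {z. \<bar>X n z\<bar> > M * r n} < \<epsilon>)"

end

theory Submission
  imports Defs
begin

text \<open>Each moment error \<open>mhat_s - m_s\<close> is \<open>1/n\<close> times a linear form, with coefficients
  \<open>\<phi>\<^sup>s\<close>, in the centred weights \<open>R_ai / \<pi>_ai - 1\<close>, whose second-moment matrix is \<open>D\<close>. Its mean
  square is therefore at most \<open>|||D||| |\<phi>\<^sup>s|\<^sup>2 / n\<^sup>2 \<le> C' |||D||| / n\<close>, so the total squared error
  \<open>T\<close> of the estimated moments has mean \<open>O(|||D||| / n)\<close>. By Markov's inequality, outside an event
  of small probability \<open>T\<close> is both inside the neighbourhood where \<open>F\<close> is Lipschitz (as
  \<open>|||D||| / n \<rightarrow> 0\<close>) and of order \<open>|||D||| / n\<close>; there the Lipschitz bound turns \<open>\<surd>T\<close> into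
  the claimed rate.\<close>

lemma bounded_range_mult:
  fixes f g :: "'a \<Rightarrow> real"
  assumes "bounded (range f)" "bounded (range g)"
  shows "bounded (range (\<lambda>z. f z * g z))"
proof -
  obtain B1 B2 where "\<And>z. \<bar>f z\<bar> \<le> B1" "\<And>z. \<bar>g z\<bar> \<le> B2"
    using assms unfolding bounded_iff by auto
  then have "\<bar>f z * g z\<bar> \<le> B1 * B2" for z
    unfolding abs_mult by (meson abs_ge_zero mult_mono order.trans)
  then show ?thesis unfolding bounded_iff by auto
qed

lemma bounded_range_sum:
  fixes f :: "'b \<Rightarrow> 'a \<Rightarrow> real"
  assumes "finite A" "\<And>x. x \<in> A \<Longrightarrow> bounded (range (f x))"
  shows "bounded (range (\<lambda>z. \<Sum>x\<in>A. f x z))"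
  using assms
proof (induction A rule: finite_induct)
  case (insert x A)
  then show ?case by (simp add: bounded_plus_comp)
qed simp

lemma integrable_measure_pmf_bounded_range:
  fixes f :: "'a \<Rightarrow> real"
  assumes "bounded (range f)"
  shows "integrable (measure_pmf p) f"
proof -
  obtain B where "\<And>z. \<bar>f z\<bar> \<le> B" using assms unfolding bounded_iff by auto
  then show ?thesis by (intro measure_pmf.integrable_const_bound[where B = B]) auto
qed

lemma bdd_above_spec_norm_set:
  assumes "finite I"
  shows "bdd_above {sqrt (\<Sum>p\<in>I. (\<Sum>q\<in>I. M p q * x q)\<^sup>2) | x. (\<Sum>q\<in>I. (x q)\<^sup>2) \<le> 1}"
proof (rule bdd_aboveI)
  fix y assume "y \<in> {sqrt (\<Sum>p\<in>I. (\<Sum>q\<in>I. M p q * x q)\<^sup>2) | x. (\<Sum>q\<in>I. (x q)\<^sup>2) \<le> 1}"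
  then obtain x where y: "y = L2_set (\<lambda>p. \<Sum>q\<in>I. M p q * x q) I"
    and x: "(\<Sum>q\<in>I. (x q)\<^sup>2) \<le> 1" by (auto simp: L2_set_def)
  have "\<bar>x q\<bar> \<le> 1" if "q \<in> I" for q
  proof -
    have "(x q)\<^sup>2 \<le> (\<Sum>q\<in>I. (x q)\<^sup>2)" by (rule member_le_sum) (use that assms in auto)
    then have "(x q)\<^sup>2 \<le> 1" using x by linarith
    then show ?thesis by (simp add: abs_square_le_1)
  qed
  then have "\<bar>\<Sum>q\<in>I. M p q * x q\<bar> \<le> (\<Sum>q\<in>I. \<bar>M p q\<bar>)" for p
    by (intro order.trans[OF sum_abs] sum_mono) (auto simp: abs_mult intro: mult_left_le)
  then show "y \<le> (\<Sum>p\<in>I. \<Sum>q\<in>I. \<bar>M p q\<bar>)"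
    unfolding y by (intro order.trans[OF L2_set_le_sum_abs] sum_mono)
qed

lemma spec_norm_upper:
  assumes "finite I" "(\<Sum>q\<in>I. (x q)\<^sup>2) \<le> 1"
  shows "L2_set (\<lambda>p. \<Sum>q\<in>I. M p q * x q) I \<le> spec_norm I M"
  unfolding spec_norm_def L2_set_def
  by (rule cSup_upper[OF _ bdd_above_spec_norm_set[OF assms(1)]]) (use assms(2) in blast)

lemma spec_norm_nonneg: "finite I \<Longrightarrow> 0 \<le> spec_norm I M"
  using spec_norm_upper[of I "\<lambda>_. 0" M] by (simp add: L2_set_def)

lemma L2_set_matrix_mult_le:
  assumes "finite I"
  shows "L2_set (\<lambda>p. \<Sum>q\<in>I. M p q * v q) I \<le> spec_norm I M * L2_set v I"
proof (cases "L2_set v I = 0")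
  case True
  then have "\<forall>q\<in>I. v q = 0" using assms by (simp add: L2_set_eq_0_iff)
  then show ?thesis using True by (simp add: L2_set_0')
next
  case False
  define c where "c = L2_set v I"
  have c: "c > 0" using False by (simp add: c_def order_less_le)
  have unit: "(\<Sum>q\<in>I. (v q / c)\<^sup>2) \<le> 1"
    using c by (simp add: c_def L2_set_def power_divide flip: sum_divide_distrib)
  have "L2_set (\<lambda>p. \<Sum>q\<in>I. M p q * v q) I = c * L2_set (\<lambda>p. \<Sum>q\<in>I. M p q * (v q / c)) I"
    using c by (simp add: L2_set_right_distrib sum_distrib_left)
  also have "\<dots> \<le> c * spec_norm I M"
    using c spec_norm_upper[OF assms unit] by simp
  finally show ?thesis by (simp add: c_def mult.commute)
qed

lemma quadratic_form_le_spec_norm: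
  assumes "finite I"
  shows "(\<Sum>p\<in>I. v p * (\<Sum>q\<in>I. M p q * v q)) \<le> spec_norm I M * (\<Sum>q\<in>I. (v q)\<^sup>2)"
proof -
  have "(\<Sum>p\<in>I. v p * (\<Sum>q\<in>I. M p q * v q)) \<le> (\<Sum>p\<in>I. \<bar>v p\<bar> * \<bar>\<Sum>q\<in>I. M p q * v q\<bar>)"
    by (rule sum_mono) (simp flip: abs_mult)
  also have "\<dots> \<le> L2_set v I * L2_set (\<lambda>p. \<Sum>q\<in>I. M p q * v q) I"
    by (rule L2_set_mult_ineq)
  also have "\<dots> \<le> L2_set v I * (spec_norm I M * L2_set v I)"
    by (intro mult_left_mono L2_set_matrix_mult_le assms L2_set_nonneg)
  also have "\<dots> = spec_norm I M * (\<Sum>q\<in>I. (v q)\<^sup>2)"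
    by (simp add: L2_set_def sum_nonneg)
  finally show ?thesis .
qed

definition ipw_deviation :: "(nat \<Rightarrow> nat) pmf \<Rightarrow> (nat \<Rightarrow> nat) \<Rightarrow> nat \<times> nat \<Rightarrow> real" where
  "ipw_deviation p z = (\<lambda>(a, i). assign_ind z a i / assign_prob p a i - 1)"

definition ht_moment ::
    "(nat \<Rightarrow> nat) pmf \<Rightarrow> nat \<Rightarrow> nat \<Rightarrow> (nat \<Rightarrow> nat \<Rightarrow> real) \<Rightarrow> (nat \<Rightarrow> nat) \<Rightarrow> real" where
  "ht_moment p k n \<phi> z = (1 / real n) * (\<Sum>a<k. \<Sum>i<n. assign_ind z a i / assign_prob p a i * \<phi> a i)"

definition pop_moment :: "nat \<Rightarrow> nat \<Rightarrow> (nat \<Rightarrow> nat \<Rightarrow> real) \<Rightarrow> real" where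
  "pop_moment k n \<phi> = (1 / real n) * (\<Sum>a<k. \<Sum>i<n. \<phi> a i)"

lemma bounded_range_ipw_deviation: "bounded (range (\<lambda>z. ipw_deviation p z q))"
proof -
  have "\<bar>ipw_deviation p z q\<bar> \<le> \<bar>1 / assign_prob p (fst q) (snd q)\<bar> + 1" for z
    using abs_triangle_ineq4[of "1 / assign_prob p (fst q) (snd q)" 1]
    by (cases q) (auto simp: ipw_deviation_def assign_ind_def)
  then show ?thesis unfolding bounded_iff by auto
qed

lemma design_matrix_eq_expectation:
  "design_matrix p q q' = measure_pmf.expectation p (\<lambda>z. ipw_deviation p z q * ipw_deviation p z q')"
  by (cases q; cases q') (simp add: design_matrix_def ipw_deviation_def)

text \<open>No hypothesis on \<open>\<pi>\<close> is needed: \<open>design_matrix\<close> is defined as the second-moment matrix of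
  the deviations, so the identity below is pure linearity of expectation.\<close>

lemma expectation_linear_form_sq:
  assumes "finite I"
  shows "measure_pmf.expectation p (\<lambda>z. (\<Sum>q\<in>I. ipw_deviation p z q * w q)\<^sup>2)
       = (\<Sum>q\<in>I. w q * (\<Sum>q'\<in>I. design_matrix p q q' * w q'))"
proof -
  have int: "integrable (measure_pmf p) (\<lambda>z. w q * w q' * (ipw_deviation p z q * ipw_deviation p z q'))"
    for q q'
    by (intro integrable_measure_pmf_bounded_range bounded_range_mult bounded_range_ipw_deviation)
      simp_all
  have "measure_pmf.expectation p (\<lambda>z. (\<Sum>q\<in>I. ipw_deviation p z q * w q)\<^sup>2)
      = measure_pmf.expectation p
          (\<lambda>z. \<Sum>q\<in>I. \<Sum>q'\<in>I. w q * w q' * (ipw_deviation p z q * ipw_deviation p z q'))"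
    by (simp add: power2_eq_square sum_product mult_ac)
  also have "\<dots> = (\<Sum>q\<in>I. \<Sum>q'\<in>I. w q * w q' * design_matrix p q q')"
    using int by (simp add: design_matrix_eq_expectation integrable_sum)
  also have "\<dots> = (\<Sum>q\<in>I. w q * (\<Sum>q'\<in>I. design_matrix p q q' * w q'))"
    by (simp add: sum_distrib_left mult_ac)
  finally show ?thesis .
qed

lemma ht_moment_error_eq:
  "ht_moment p k n \<phi> z - pop_moment k n \<phi>
     = (1 / real n) * (\<Sum>q\<in>{..<k} \<times> {..<n}. ipw_deviation p z q * \<phi> (fst q) (snd q))"
proof -
  have "ht_moment p k n \<phi> z - pop_moment k n \<phi>
      = (1 / real n) * (\<Sum>a<k. \<Sum>i<n. (assign_ind z a i / assign_prob p a i - 1) * \<phi> a i)"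
    by (simp add: ht_moment_def pop_moment_def sum_subtractf left_diff_distrib right_diff_distrib)
  then show ?thesis
    by (simp add: ipw_deviation_def sum.cartesian_product split_beta)
qed

lemma integrable_ht_moment_error_sq:
  "integrable (measure_pmf p) (\<lambda>z. (ht_moment p k n \<phi> z - pop_moment k n \<phi>)\<^sup>2)"
  unfolding ht_moment_error_eq power2_eq_square
  by (intro integrable_measure_pmf_bounded_range bounded_range_mult bounded_range_sum
      bounded_range_ipw_deviation) simp_all

lemma expectation_ht_moment_error_sq_le:
  "measure_pmf.expectation p (\<lambda>z. (ht_moment p k n \<phi> z - pop_moment k n \<phi>)\<^sup>2)
     \<le> spec_norm ({..<k} \<times> {..<n}) (design_matrix p) / real n
         * ((1 / real n) * (\<Sum>a<k. \<Sum>i<n. (\<phi> a i)\<^sup>2))"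
proof -
  define I where "I = {..<k} \<times> {..<n}"
  define w where "w q = \<phi> (fst q) (snd q)" for q
  have "measure_pmf.expectation p (\<lambda>z. (ht_moment p k n \<phi> z - pop_moment k n \<phi>)\<^sup>2)
      = (1 / real n)\<^sup>2 * measure_pmf.expectation p (\<lambda>z. (\<Sum>q\<in>I. ipw_deviation p z q * w q)\<^sup>2)"
    unfolding ht_moment_error_eq power_mult_distrib I_def w_def by (rule integral_mult_right_zero)
  also have "\<dots> = (1 / real n)\<^sup>2 * (\<Sum>q\<in>I. w q * (\<Sum>q'\<in>I. design_matrix p q q' * w q'))"
    by (simp add: expectation_linear_form_sq I_def)
  also have "\<dots> \<le> (1 / real n)\<^sup>2 * (spec_norm I (design_matrix p) * (\<Sum>q\<in>I. (w q)\<^sup>2))"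
    by (intro mult_left_mono quadratic_form_le_spec_norm) (simp_all add: I_def)
  also have "(\<Sum>q\<in>I. (w q)\<^sup>2) = (\<Sum>a<k. \<Sum>i<n. (\<phi> a i)\<^sup>2)"
    by (simp add: I_def w_def sum.cartesian_product split_beta)
  finally show ?thesis by (simp add: I_def power2_eq_square)
qed

lemma expectation_sum_ht_moment_errors_sq_le:
  assumes "\<And>s. s < L \<Longrightarrow> (1 / real n) * (\<Sum>a<k. \<Sum>i<n. (\<phi> s a i)\<^sup>2) \<le> C'"
  shows "measure_pmf.expectation p
           (\<lambda>z. \<Sum>s<L. (ht_moment p k n (\<phi> s) z - pop_moment k n (\<phi> s))\<^sup>2)
         \<le> (real L * C') * (spec_norm ({..<k} \<times> {..<n}) (design_matrix p) / real n)"
proof -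
  have "measure_pmf.expectation p
          (\<lambda>z. \<Sum>s<L. (ht_moment p k n (\<phi> s) z - pop_moment k n (\<phi> s))\<^sup>2)
      = (\<Sum>s<L. measure_pmf.expectation p
          (\<lambda>z. (ht_moment p k n (\<phi> s) z - pop_moment k n (\<phi> s))\<^sup>2))"
    by (rule Bochner_Integration.integral_sum) (rule integrable_ht_moment_error_sq)
  also have "\<dots> \<le> (\<Sum>s<L. spec_norm ({..<k} \<times> {..<n}) (design_matrix p) / real n * C')"
    using assms
    by (intro sum_mono order.trans[OF expectation_ht_moment_error_sq_le] mult_left_mono)
      (simp_all add: spec_norm_nonneg)
  finally show ?thesis by (simp add: mult_ac)
qed

text \<open>Markov's inequality at level \<open>a r\<close>; the case \<open>r = 0\<close> needs \<open>T = 0\<close> almost surely instead.\<close>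

lemma prob_gt_rate_le:
  fixes T :: "'a \<Rightarrow> real"
  assumes T: "integrable (measure_pmf p) T" "\<And>z. 0 \<le> T z"
    and mean: "measure_pmf.expectation p T \<le> K * r"
    and "0 \<le> K" "0 \<le> r" "0 < a"
  shows "measure_pmf.prob p {z. a * r < T z} \<le> K / a"
proof (cases "r = 0")
  case True
  then have "measure_pmf.expectation p T = 0"
    using mean integral_nonneg_AE[of T] T by (simp add: order_antisym)
  then have "AE z in measure_pmf p. T z = 0"
    using measure_pmf.integral_nonneg_eq_0_iff_AE_banach[OF T(1)] T(2) by auto
  then have "measure_pmf.prob p {z. a * r < T z} = 0"
    using True by (auto simp: measure_pmf_zero_iff AE_measure_pmf_iff)
  then show ?thesis using assms by simp
next
  case False
  then have ar: "0 < a * r" using assms by simp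
  have "measure_pmf.prob p {z. a * r < T z} \<le> measure_pmf.prob p {z. a * r \<le> T z}"
    by (rule measure_pmf.finite_measure_mono) auto
  also have "\<dots> \<le> measure_pmf.expectation p T / (a * r)"
    using integral_Markov_inequality_measure[OF T(1) _ _ ar] T(2) by simp
  also have "\<dots> \<le> K * r / (a * r)" by (intro divide_right_mono mean) (use ar in simp)
  finally show ?thesis using False by simp
qed

lemma bigOp_sqrt_rate_of_local_bound:
  fixes T X :: "nat \<Rightarrow> (nat \<Rightarrow> nat) \<Rightarrow> real"
  assumes T: "\<And>n. integrable (measure_pmf (P n)) (T n)" "\<And>n z. 0 \<le> T n z"
    and mean: "\<And>n. measure_pmf.expectation (P n) (T n) \<le> K * r n"
    and K: "0 \<le> K" and r: "\<And>n. 0 \<le> r n" "r \<longlonglongrightarrow> 0"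
    and C: "0 < C" and eps: "0 < eps"
    and local_bound: "\<And>n z. N \<le> n \<Longrightarrow> T n z < eps \<Longrightarrow> \<bar>X n z\<bar> \<le> C * sqrt (T n z)"
  shows "bigOp P X (\<lambda>n. sqrt (r n))"
  unfolding bigOp_def
proof (intro allI impI)
  fix e :: real assume e: "e > 0"
  define a where "a = 2 * K / e + 1"
  have a: "0 < a" "K / a < e / 2"
    using K e by (auto simp: a_def field_simps)
  have "(\<lambda>n. K * r n / eps) \<longlonglongrightarrow> K * 0 / eps"
    by (intro tendsto_intros r) (use eps in simp)
  then have "eventually (\<lambda>n. K * r n / eps < e / 2) sequentially"
    by (rule order_tendstoD(2)) (use e in simp)
  then obtain N' where N': "\<And>n. N' \<le> n \<Longrightarrow> K * r n / eps < e / 2"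
    unfolding eventually_sequentially by blast
  show "\<exists>M N. \<forall>n\<ge>N. measure_pmf.prob (P n) {z. \<bar>X n z\<bar> > M * sqrt (r n)} < e"
  proof (intro exI[of _ "C * sqrt a"] exI[of _ "max N N'"] allI impI)
    fix n assume n: "max N N' \<le> n"
    have "{z. \<bar>X n z\<bar> > C * sqrt a * sqrt (r n)} \<subseteq> {z. eps \<le> T n z} \<union> {z. a * r n < T n z}"
    proof (intro subsetI)
      fix z assume z: "z \<in> {z. \<bar>X n z\<bar> > C * sqrt a * sqrt (r n)}"
      show "z \<in> {z. eps \<le> T n z} \<union> {z. a * r n < T n z}"
      proof (cases "eps \<le> T n z")
        case False
        then have "C * sqrt (a * r n) < C * sqrt (T n z)"
          using z local_bound[of n z] n by (simp add: real_sqrt_mult mult.assoc)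
        then show ?thesis using C by simp
      qed simp
    qed
    then have "measure_pmf.prob (P n) {z. \<bar>X n z\<bar> > C * sqrt a * sqrt (r n)}
        \<le> measure_pmf.prob (P n) {z. eps \<le> T n z} + measure_pmf.prob (P n) {z. a * r n < T n z}"
      by (intro order.trans[OF measure_pmf.finite_measure_mono measure_Un_le]) auto
    also have "\<dots> < e / 2 + e / 2"
    proof (rule add_less_le_mono)
      have "measure_pmf.prob (P n) {z. eps \<le> T n z} \<le> measure_pmf.expectation (P n) (T n) / eps"
        using integral_Markov_inequality_measure[OF T(1) _ _ eps] T(2) by simp
      also have "\<dots> \<le> K * r n / eps" by (intro divide_right_mono mean) (use eps in simp)
      also have "\<dots> < e / 2" using N' n by simp
      finally show "measure_pmf.prob (P n) {z. eps \<le> T n z} < e / 2" .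
      show "measure_pmf.prob (P n) {z. a * r n < T n z} \<le> e / 2"
        using order.trans[OF prob_gt_rate_le[OF T mean K r(1) a(1)] less_imp_le[OF a(2)]] .
    qed
    finally show "measure_pmf.prob (P n) {z. \<bar>X n z\<bar> > C * sqrt a * sqrt (r n)} < e" by simp
  qed
qed

theorem mainTheorem1:
  fixes k l1 l2 :: nat
    and P :: "nat \<Rightarrow> (nat \<Rightarrow> nat) pmf"
    and \<phi> :: "nat \<Rightarrow> nat \<Rightarrow> nat \<Rightarrow> nat \<Rightarrow> real"
    and F :: "nat \<Rightarrow> (nat \<Rightarrow> real) \<Rightarrow> (nat \<Rightarrow> real)"
    and m :: "nat \<Rightarrow> nat \<Rightarrow> real"
    and mhat :: "nat \<Rightarrow> nat \<Rightarrow> (nat \<Rightarrow> nat) \<Rightarrow> real"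
  assumes l1: "l1 \<ge> 1"
    and valid: "\<And>n z i. z \<in> set_pmf (P n) \<Longrightarrow> i < n \<Longrightarrow> z i < k"
    and pi_pos: "\<And>n a i. a < k \<Longrightarrow> i < n \<Longrightarrow> 0 < assign_prob (P n) a i"
    and pi_lt1: "\<And>n a i. a < k \<Longrightarrow> i < n \<Longrightarrow> assign_prob (P n) a i < 1"
    and m_def: "\<And>n s. m n s = (1 / real n) * (\<Sum>a<k. \<Sum>i<n. \<phi> n s a i)"
    and mhat_def: "\<And>n s z. mhat n s z =
        (1 / real n) * (\<Sum>a<k. \<Sum>i<n. assign_ind z a i / assign_prob (P n) a i * \<phi> n s a i)"
    and lip: "\<exists>N C \<epsilon>. C > 0 \<and> \<epsilon> > 0 \<and> (\<forall>n\<ge>N. \<forall>mt :: nat \<Rightarrow> real.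
        (\<Sum>s<l1. (mt s - m n s)\<^sup>2) < \<epsilon> \<longrightarrow>
        sqrt (\<Sum>a<k. (F n (\<lambda>s. if s < l1 then mt s else m n s) a - F n (m n) a)\<^sup>2)
          \<le> C * sqrt (\<Sum>s<l1. (mt s - m n s)\<^sup>2))"
    and bnd: "\<exists>C'. \<forall>n s. s < l1 + l2 \<longrightarrow>
        (1 / real n) * (\<Sum>a<k. \<Sum>i<n. (\<phi> n s a i)\<^sup>2) \<le> C'"
    and D_lim: "(\<lambda>n. spec_norm ({..<k} \<times> {..<n}) (design_matrix (P n)) / real n)
        \<longlonglongrightarrow> 0"
  shows "bigOp P
     (\<lambda>n z. sqrt (\<Sum>a<k. (F n (\<lambda>s. if s < l1 then mhat n s z else m n s) a - F n (m n) a)\<^sup>2))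
     (\<lambda>n. sqrt (spec_norm ({..<k} \<times> {..<n}) (design_matrix (P n)) / real n))"
proof -
  define r where "r n = spec_norm ({..<k} \<times> {..<n}) (design_matrix (P n)) / real n" for n
  define T where "T n z = (\<Sum>s<l1. (ht_moment (P n) k n (\<phi> n s) z - pop_moment k n (\<phi> n s))\<^sup>2)"
    for n z
  have error: "mhat n s z - m n s = ht_moment (P n) k n (\<phi> n s) z - pop_moment k n (\<phi> n s)" for n s z
    by (simp add: mhat_def m_def ht_moment_def pop_moment_def)
  obtain N C eps where C: "C > 0" and eps: "eps > 0" and local_bound: "\<And>n z. N \<le> n \<Longrightarrow> T n z < eps \<Longrightarrow>
      \<bar>sqrt (\<Sum>a<k. (F n (\<lambda>s. if s < l1 then mhat n s z else m n s) a - F n (m n) a)\<^sup>2)\<bar>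
        \<le> C * sqrt (T n z)"
    using lip unfolding T_def by (fastforce simp: sum_nonneg simp flip: error)
  obtain C' where C': "\<And>n s. s < l1 + l2 \<Longrightarrow> (1 / real n) * (\<Sum>a<k. \<Sum>i<n. (\<phi> n s a i)\<^sup>2) \<le> C'"
    using bnd by blast
  \<comment> \<open>the instance \<open>n = 0\<close>, where \<open>1 / real 0 = 0\<close>\<close>
  have "0 \<le> C'" using C'[of 0 0] l1 by simp
  have mean: "measure_pmf.expectation (P n) (T n) \<le> (real l1 * C') * r n" for n
    unfolding T_def r_def by (rule expectation_sum_ht_moment_errors_sq_le) (rule C', simp)
  have "bigOp P
      (\<lambda>n z. sqrt (\<Sum>a<k. (F n (\<lambda>s. if s < l1 then mhat n s z else m n s) a - F n (m n) a)\<^sup>2))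
      (\<lambda>n. sqrt (r n))"
    using D_lim \<open>0 \<le> C'\<close>
    by (intro bigOp_sqrt_rate_of_local_bound[OF _ _ mean _ _ _ C eps local_bound])
      (simp_all add: T_def integrable_ht_moment_error_sq r_def spec_norm_nonneg sum_nonneg)
  then show ?thesis by (simp add: r_def)
qed

end
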